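(* Let $R>0$, $D>0$, $k\ge0$ an integer and $n\ge k+2$. For every algorithm $\mathcal A\in\mathfrak A_{\mathrm{sep}}$, $$\sup\ \|\nabla\mathbf L(\mathbf z^k)\|^2\ \ge\ \frac{R^2D^2}{(2\lfloor k/2\rfloor+1)^2},$$ where the supremum is over all $R$-smooth convex-concave $\mathbf L$ on $\mathbb R^n\times\mathbb R^n$ having a saddle point $\mathbf z^\star$ and all starting points $\mathbf z^0$ with $\|\mathbf z^0-\mathbf z^\star\|\le D$, and $\mathbf z^k$ is the $k$-th iterate of $\mathcal A$ applied to $\mathbf L$ from $\mathbf z^0$. Consequently, the EAG-C and EAG-V algorithms, which achieve $\|\nabla\mathbf L(\mathbf z^k)\|^2=\mathcal O(R^2\|\mathbf z^0-\mathbf z^\star\|^2/k^2)$, are optimal up to a constant factor in $\mathfrak A_{\mathrm{sep}}$.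
   Context: Write $\mathbf z=(\mathbf x,\mathbf y)$. $\mathbf L$ convex-concave: convex in $\mathbf x$ for fixed $\mathbf y$, concave in $\mathbf y$ for fixed $\mathbf x$; a saddle point $(\mathbf x^\star,\mathbf y^\star)$ satisfies $\mathbf L(\mathbf x^\star,\mathbf y)\le\mathbf L(\mathbf x^\star,\mathbf y^\star)\le\mathbf L(\mathbf x,\mathbf y^\star)$ for all $\mathbf x,\mathbf y$. $\mathbf G(\mathbf z)=(\nabla_{\mathbf x}\mathbf L,-\nabla_{\mathbf y}\mathbf L)$; $R$-smooth means $\mathbf G$ is $R$-Lipschitz. A deterministic algorithm produces $\mathbf z^j=\mathcal A(\mathbf z^0,\dots,\mathbf z^{j-1};\mathbf L)$; $\mathfrak A_{\mathrm{sep}}$ is the class of such algorithms with $\mathbf x^j\in\mathbf x^0+\mathrm{span}\{\nabla_{\mathbf x}\mathbf L(\mathbf z^0),\dots,\nabla_{\mathbf x}\mathbf L(\mathbf z^{j-1})\}$ and $\mathbf y^j\in\mathbf y^0+\mathrm{span}\{\nabla_{\mathbf y}\mathbf L(\mathbf z^0),\dots,\nabla_{\mathbf y}\mathbf L(\mathbf z^{j-1})\}$ for all $j\ge1$. EAG-C: $\mathbf z^{k+1/2}=\mathbf z^k+\frac1{k+2}(\mathbf z^0-\mathbf z^k)-\alpha\mathbf G(\mathbf z^k)$, $\mathbf z^{k+1}=\mathbf z^k+\frac1{k+2}(\mathbf z^0-\mathbf z^k)-\alpha\mathbf G(\mathbf z^{k+1/2})$ with constant $\alpha$; EAG-V is the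 same with step-sizes $\alpha_k$ given by $\alpha_{k+1}=\alpha_k\big(1-\frac{1}{(k+1)(k+3)}\frac{\alpha_k^2R^2}{1-\alpha_k^2R^2}\big)$. *)

theory Defs
  imports "HOL-Analysis.Analysis"
begin

text \<open>Points z = (x, y) live in R^n x R^n, rendered as real^'n \<times> real^'n
  (norm of a pair is the Euclidean norm sqrt(|x|^2 + |y|^2)).\<close>

type_synonym 'n pt = "(real^'n) \<times> (real^'n)"

text \<open>Gradient of a real-valued function (meaningful where it is differentiable).\<close>
definition grad :: "('a::real_inner \<Rightarrow> real) \<Rightarrow> 'a \<Rightarrow> 'a" where
  "grad f z = (SOME g. GDERIV f z :> g)"

definition saddle_op :: "(('n::finite) pt \<Rightarrow> real) \<Rightarrow> 'n pt \<Rightarrow> 'n pt" where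
  "saddle_op L z = (fst (grad L z), - snd (grad L z))"

definition convex_concave :: "(('n::finite) pt \<Rightarrow> real) \<Rightarrow> bool" where
  "convex_concave L \<longleftrightarrow>
     (\<forall>y. convex_on UNIV (\<lambda>x. L (x, y))) \<and> (\<forall>x. concave_on UNIV (\<lambda>y. L (x, y)))"

definition R_smooth :: "real \<Rightarrow> (('n::finite) pt \<Rightarrow> real) \<Rightarrow> bool" where
  "R_smooth R L \<longleftrightarrow> (\<forall>z. L differentiable (at z)) \<and> R-lipschitz_on UNIV (saddle_op L)"

definition saddle_point :: "(('n::finite) pt \<Rightarrow> real) \<Rightarrow> 'n pt \<Rightarrow> bool" where
  "saddle_point L zs \<longleftrightarrow>
     (\<forall>x y. L (fst zs, y) \<le> L zs \<and> L zs \<le> L (x, snd zs))"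

type_synonym 'n algorithm = "'n pt list \<Rightarrow> (('n::finite) pt \<Rightarrow> real) \<Rightarrow> 'n pt"

fun alg_traj ::"('n::finite) algorithm \<Rightarrow> (('n::finite) pt \<Rightarrow> real) \<Rightarrow> 'n pt \<Rightarrow> nat \<Rightarrow> 'n pt list" where
  "alg_traj A L z0 0 = [z0]"
| "alg_traj A L z0 (Suc j) = alg_traj A L z0 j @ [A (alg_traj A L z0 j) L]"

definition alg_iter ::"('n::finite) algorithm \<Rightarrow> (('n::finite) pt \<Rightarrow> real) \<Rightarrow> 'n pt \<Rightarrow> nat \<Rightarrow> 'n pt" where
  "alg_iter A L z0 j = last (alg_traj A L z0 j)"

definition alg_sep ::"('n::finite) algorithm \<Rightarrow> bool" where
  "alg_sep A \<longleftrightarrow> (\<forall>L z0 j. (\<forall>z. L differentiable (at z)) \<longrightarrow> j \<ge> 1 \<longrightarrow>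
      fst (alg_iter A L z0 j) - fst z0 \<in> span {fst (grad L (alg_iter A L z0 i)) | i. i < j} \<and>
      snd (alg_iter A L z0 j) - snd z0 \<in> span {snd (grad L (alg_iter A L z0 i)) | i. i < j})"

end

theory Submission
  imports Defs "HOL-Computational_Algebra.Polynomial"
begin

text \<open>
  The hard instances are bilinear games L(x, y) = <diag(s) x - b, y> started at z^0 = 0.
  For an algorithm in A_sep, x^j and y^j stay in the spans of the Krylov vectors diag(s)^l b
  with l odd, resp. even, and l < j, so the residual diag(s) x^k - b lies in
  -b + span {diag(s)^(2q) b | 1 \<le> q \<le> k/2}. A vector w orthogonal to these vectors with
  <w, b> = \<gamma> gives, by Cauchy-Schwarz, ||grad L(z^k)||^2 \<ge> \<gamma>^2 / ||w||^2.

  Take m = k div 2, s_i = R x_i with x_i = cos (i \<pi> / (2m + 1)) for i \<le> m, and w_i b_i = \<gamma> c_i,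
  where c_i are the weights of Lagrange extrapolation to 0 from the nodes x_i^2: the
  orthogonality conditions are then the moment identities of the c_i. The c_i alternate in
  sign, and interpolating the polynomial P_m with x P_m(x^2) = T_(2m+1)(x) yields
  \<Sum> |c_i| / x_i = 2m + 1. Splitting c_i evenly between w and b makes both ||w||^2 and
  (R / \<gamma>)^2 ||z^0 - z*||^2 equal to 2m + 1, which is the bound R^2 D^2 / (2m + 1)^2.
\<close>

definition lagrange_basis :: "(nat \<Rightarrow> 'a::field) \<Rightarrow> nat \<Rightarrow> nat \<Rightarrow> 'a poly" where
  "lagrange_basis t m i =
     smult (inverse (\<Prod>j\<in>{..m}-{i}. t i - t j)) (\<Prod>j\<in>{..m}-{i}. [:- t j, 1:])"

lemma poly_lagrange_basis:
  "poly (lagrange_basis t m i) x = (\<Prod>j\<in>{..m}-{i}. (x - t j) / (t i - t j))"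
  by (simp add: lagrange_basis_def poly_prod prod_dividef field_simps)

lemma degree_lagrange_basis:
  assumes "i \<le> m"
  shows "degree (lagrange_basis t m i) \<le> m"
proof -
  have "degree (lagrange_basis t m i) \<le> degree (\<Prod>j\<in>{..m}-{i}. [:- t j, 1:])"
    unfolding lagrange_basis_def by (rule degree_smult_le)
  also have "\<dots> \<le> (\<Sum>j\<in>{..m}-{i}. degree [:- t j, 1:])"
    using degree_prod_sum_le[of "{..m}-{i}" "\<lambda>j. [:- t j, 1:]"] by (simp add: o_def)
  also have "\<dots> = m"
    using assms by simp
  finally show ?thesis .
qed

lemma poly_lagrange_basis_node:
  assumes "inj_on t {..m}" "i \<le> m" "l \<le> m"
  shows "poly (lagrange_basis t m i) (t l) = (if l = i then 1 else 0)"
proof (cases "l = i")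
  case True
  have "t i \<noteq> t j" if "j \<in> {..m}-{i}" for j
    using assms that by (auto simp: inj_on_def)
  then show ?thesis
    using True by (simp add: poly_lagrange_basis)
next
  case False
  then show ?thesis
    using assms by (simp add: poly_lagrange_basis) (intro prod_zero bexI[of _ l], auto)
qed

lemma poly_lagrange_interpolation:
  fixes P :: "'a::field poly"
  assumes inj: "inj_on t {..m}" and deg: "degree P \<le> m"
  shows "poly P x = (\<Sum>i\<le>m. poly P (t i) * poly (lagrange_basis t m i) x)"
proof -
  define Q where "Q = (\<Sum>i\<le>m. smult (poly P (t i)) (lagrange_basis t m i))"
  have "degree Q \<le> m"
    unfolding Q_def
    by (intro degree_sum_le order_trans[OF degree_smult_le] degree_lagrange_basis) auto
  moreover have "poly Q (t l) = poly P (t l)" if "l \<le> m" for l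
  proof -
    have "poly Q (t l) = (\<Sum>i\<le>m. poly P (t i) * (if l = i then 1 else 0))"
      unfolding Q_def poly_sum poly_smult
      by (intro sum.cong refl) (simp add: poly_lagrange_basis_node[OF inj _ that])
    then show ?thesis
      using that by (simp add: if_distrib cong: if_cong)
  qed
  moreover have "card (t ` {..m}) = Suc m"
    using inj by (simp add: card_image)
  ultimately have "P = Q"
    using deg by (intro poly_eqI_degree[of "t ` {..m}"]) auto
  then have "poly P x = poly Q x"
    by simp
  then show ?thesis
    by (simp add: Q_def poly_sum)
qed

text \<open>The recurrence is that of the Chebyshev polynomial T_(2m+1)(x) / x, written in x^2.\<close>

fun odd_cos_poly :: "nat \<Rightarrow> real poly" where
  "odd_cos_poly 0 = 1"
| "odd_cos_poly (Suc 0) = [:-3, 4:]"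
| "odd_cos_poly (Suc (Suc m)) = [:-2, 4:] * odd_cos_poly (Suc m) - odd_cos_poly m"

lemma degree_odd_cos_poly: "degree (odd_cos_poly m) \<le> m"
proof (induction m rule: odd_cos_poly.induct)
  case (3 m)
  have "degree ([:-2, 4:] * odd_cos_poly (Suc m)) \<le> Suc (Suc m)"
    using degree_mult_le[of "[:-2, 4:]" "odd_cos_poly (Suc m)"] 3(1) by simp
  moreover have "degree (odd_cos_poly m) \<le> Suc (Suc m)"
    using 3(2) by simp
  ultimately show ?case
    by (simp add: degree_diff_le)
qed auto

lemma poly_odd_cos_poly_0: "poly (odd_cos_poly m) 0 = (-1)^m * (2 * real m + 1)"
  by (induction m rule: odd_cos_poly.induct) (auto simp: algebra_simps)

lemma cos_mult_odd_cos_poly: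
  "cos \<theta> * poly (odd_cos_poly m) ((cos \<theta>)\<^sup>2) = cos ((2 * real m + 1) * \<theta>)"
proof (induction m rule: odd_cos_poly.induct)
  case 2
  show ?case
    using cos_treble_cos[of \<theta>] by (simp add: algebra_simps power3_eq_cube power2_eq_square)
next
  case (3 m)
  have sum_to_product: "cos ((2 * real m + 5) * \<theta>) + cos ((2 * real m + 1) * \<theta>)
      = 2 * cos (2 * \<theta>) * cos ((2 * real m + 3) * \<theta>)"
    using cos_plus_cos[of "(2 * real m + 5) * \<theta>" "(2 * real m + 1) * \<theta>"]
    by (simp add: algebra_simps add_divide_distrib diff_divide_distrib)
  have "cos \<theta> * poly (odd_cos_poly (Suc (Suc m))) ((cos \<theta>)\<^sup>2)
      = (4 * (cos \<theta>)\<^sup>2 - 2) * (cos \<theta> * poly (odd_cos_poly (Suc m)) ((cos \<theta>)\<^sup>2))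
        - cos \<theta> * poly (odd_cos_poly m) ((cos \<theta>)\<^sup>2)"
    by (simp add: algebra_simps)
  also have "\<dots> = (4 * (cos \<theta>)\<^sup>2 - 2) * cos ((2 * real m + 3) * \<theta>) - cos ((2 * real m + 1) * \<theta>)"
    using 3 by (simp add: algebra_simps)
  also have "\<dots> = 2 * cos (2 * \<theta>) * cos ((2 * real m + 3) * \<theta>) - cos ((2 * real m + 1) * \<theta>)"
    by (simp only: cos_double_cos) (simp add: algebra_simps)
  also have "\<dots> = cos ((2 * real (Suc (Suc m)) + 1) * \<theta>)"
    using sum_to_product by (simp add: algebra_simps)
  finally show ?case .
qed simp

definition cheb_node :: "nat \<Rightarrow> nat \<Rightarrow> real" where
  "cheb_node m i = cos (real i * pi / (2 * real m + 1))"

definition cheb_weight :: "nat \<Rightarrow> nat \<Rightarrow> real" where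
  "cheb_weight m i = poly (lagrange_basis (\<lambda>j. (cheb_node m j)\<^sup>2) m i) 0"

lemma cheb_node_pos:
  assumes "i \<le> m"
  shows "0 < cheb_node m i"
proof -
  have "2 * real i * pi < (2 * real m + 1) * pi"
    using assms by (intro mult_strict_right_mono) auto
  then have "real i * pi / (2 * real m + 1) < pi / 2"
    by (simp add: field_simps)
  moreover have "- (pi / 2) < 0" "0 \<le> real i * pi / (2 * real m + 1)"
    by simp_all
  ultimately show ?thesis
    unfolding cheb_node_def by (intro cos_gt_zero_pi) linarith+
qed

lemma cheb_node_le_1: "cheb_node m i \<le> 1"
  by (simp add: cheb_node_def)

lemma cheb_node_sq_less:
  assumes "i < j" "j \<le> m"
  shows "(cheb_node m j)\<^sup>2 < (cheb_node m i)\<^sup>2"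
proof -
  have "real j * pi \<le> (2 * real m + 1) * pi"
    using assms by (intro mult_right_mono) auto
  then have "real j * pi / (2 * real m + 1) \<le> pi"
    by (simp add: field_simps)
  moreover have "real i * pi / (2 * real m + 1) < real j * pi / (2 * real m + 1)"
    using assms by (simp add: divide_strict_right_mono)
  ultimately have "cheb_node m j < cheb_node m i"
    unfolding cheb_node_def by (intro cos_monotone_0_pi) auto
  then show ?thesis
    using cheb_node_pos[OF assms(2)] by (intro power_strict_mono) auto
qed

lemma inj_on_cheb_node_sq: "inj_on (\<lambda>i. (cheb_node m i)\<^sup>2) {..m}"
  by (rule linorder_inj_onI') (use cheb_node_sq_less in fastforce)

lemma poly_odd_cos_poly_cheb_node:
  assumes "i \<le> m"
  shows "poly (odd_cos_poly m) ((cheb_node m i)\<^sup>2) = (-1)^i / cheb_node m i"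
proof -
  have "cheb_node m i * poly (odd_cos_poly m) ((cheb_node m i)\<^sup>2) = cos (real i * pi)"
    using cos_mult_odd_cos_poly[of "real i * pi / (2 * real m + 1)" m]
    by (simp add: cheb_node_def add_pos_pos)
  then show ?thesis
    using cheb_node_pos[OF assms] by (simp add: field_simps)
qed

lemma cheb_weight_moment:
  assumes "q \<le> m"
  shows "(\<Sum>i\<le>m. cheb_weight m i * cheb_node m i ^ (2 * q)) = (if q = 0 then 1 else 0)"
proof -
  have "(\<Sum>i\<le>m. cheb_weight m i * cheb_node m i ^ (2 * q))
      = (\<Sum>i\<le>m. poly (monom 1 q) ((cheb_node m i)\<^sup>2) * poly (lagrange_basis (\<lambda>j. (cheb_node m j)\<^sup>2) m i) 0)"
    by (simp add: cheb_weight_def poly_monom mult.commute flip: power_mult)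
  also have "\<dots> = poly (monom 1 q) 0"
    using assms by (intro poly_lagrange_interpolation[OF inj_on_cheb_node_sq, symmetric])
      (simp add: degree_monom_eq)
  finally show ?thesis
    by (simp add: poly_monom)
qed

lemma cheb_weight_alternating:
  assumes "i \<le> m"
  shows "0 < (-1)^(m - i) * cheb_weight m i"
proof -
  define f where "f j = (cheb_node m j)\<^sup>2 / ((cheb_node m j)\<^sup>2 - (cheb_node m i)\<^sup>2)" for j
  have split: "{..m}-{i} = {..<i} \<union> {i<..m}"
    using assms by auto
  have "cheb_weight m i = (\<Prod>j\<in>{..m}-{i}. f j)"
    unfolding cheb_weight_def poly_lagrange_basis f_def
    by (intro prod.cong refl) (metis divide_minus_left divide_minus_right minus_diff_eq diff_0)
  also have "\<dots> = (\<Prod>j\<in>{..<i}. f j) * (\<Prod>j\<in>{i<..m}. f j)"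
    unfolding split by (rule prod.union_disjoint) auto
  finally have "(-1)^(m - i) * cheb_weight m i = (\<Prod>j\<in>{..<i}. f j) * (\<Prod>j\<in>{i<..m}. - f j)"
    by (simp add: prod_uminus)
  also have "\<dots> > 0"
  proof (intro mult_pos_pos prod_pos)
    fix j assume "j \<in> {..<i}"
    then show "0 < f j"
      using assms cheb_node_sq_less[of j i m] cheb_node_pos[of j m] by (simp add: f_def)
  next
    fix j assume "j \<in> {i<..m}"
    then show "0 < - f j"
      using cheb_node_sq_less[of i j m] cheb_node_pos[of j m]
      by (simp add: f_def divide_pos_neg)
  qed
  finally show ?thesis .
qed

lemma abs_cheb_weight:
  assumes "i \<le> m"
  shows "\<bar>cheb_weight m i\<bar> = (-1)^m * ((-1)^i * cheb_weight m i)"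
proof -
  have "(-1::real)^m * (-1)^i = (-1)^((m - i) + 2 * i)"
    using assms by (simp add: add.commute flip: power_add)
  also have "\<dots> = (-1)^(m - i)"
    by (simp add: power_add power_mult)
  finally have sign: "(-1::real)^m * (-1)^i = (-1)^(m - i)" .
  have "\<bar>cheb_weight m i\<bar> = \<bar>(-1)^(m - i) * cheb_weight m i\<bar>"
    by (simp add: abs_mult)
  also have "\<dots> = (-1)^(m - i) * cheb_weight m i"
    using cheb_weight_alternating[OF assms] by simp
  finally show ?thesis
    by (simp add: sign mult.assoc[symmetric])
qed

lemma sum_abs_cheb_weight_div_node:
  "(\<Sum>i\<le>m. \<bar>cheb_weight m i\<bar> / cheb_node m i) = 2 * real m + 1"
proof -
  have "(-1)^m * (2 * real m + 1) = poly (odd_cos_poly m) 0"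
    by (simp add: poly_odd_cos_poly_0)
  also have "\<dots> = (\<Sum>i\<le>m. poly (odd_cos_poly m) ((cheb_node m i)\<^sup>2)
                        * poly (lagrange_basis (\<lambda>j. (cheb_node m j)\<^sup>2) m i) 0)"
    by (rule poly_lagrange_interpolation[OF inj_on_cheb_node_sq degree_odd_cos_poly])
  also have "\<dots> = (\<Sum>i\<le>m. (-1)^i / cheb_node m i * cheb_weight m i)"
    by (intro sum.cong refl) (simp add: poly_odd_cos_poly_cheb_node cheb_weight_def)
  finally have "(-1)^m * ((-1)^m * (2 * real m + 1))
      = (\<Sum>i\<le>m. \<bar>cheb_weight m i\<bar> / cheb_node m i)"
    by (simp add: sum_distrib_left abs_cheb_weight)
  then show ?thesis
    by (simp flip: power_add)
qed

text \<open>
  Splitting the weights evenly between the test vector w and the right-hand side b balances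
  ||w|| against the distance ||z^0 - z*|| to the saddle point.
\<close>

definition cheb_test :: "nat \<Rightarrow> nat \<Rightarrow> real" where
  "cheb_test m i = sgn (cheb_weight m i) * sqrt (\<bar>cheb_weight m i\<bar> / cheb_node m i)"

definition cheb_rhs :: "nat \<Rightarrow> nat \<Rightarrow> real" where
  "cheb_rhs m i = sqrt (\<bar>cheb_weight m i\<bar> * cheb_node m i)"

lemma cheb_test_mult_rhs:
  assumes "i \<le> m"
  shows "cheb_test m i * cheb_rhs m i = cheb_weight m i"
proof -
  have "sqrt (\<bar>cheb_weight m i\<bar> / cheb_node m i) * sqrt (\<bar>cheb_weight m i\<bar> * cheb_node m i)
      = \<bar>cheb_weight m i\<bar>"
    using cheb_node_pos[OF assms] by (simp flip: real_sqrt_mult)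
  then show ?thesis
    by (simp add: cheb_test_def cheb_rhs_def mult.assoc sgn_mult_abs)
qed

lemma cheb_test_sq:
  assumes "i \<le> m"
  shows "(cheb_test m i)\<^sup>2 = \<bar>cheb_weight m i\<bar> / cheb_node m i"
  using cheb_node_pos[OF assms]
  by (cases "cheb_weight m i = 0") (simp_all add: cheb_test_def power_mult_distrib sgn_if)

lemma cheb_rhs_div_node_sq:
  assumes "i \<le> m"
  shows "(cheb_rhs m i / cheb_node m i)\<^sup>2 = \<bar>cheb_weight m i\<bar> / cheb_node m i"
  using cheb_node_pos[OF assms] by (simp add: cheb_rhs_def power_divide power2_eq_square)

lemma grad_eqI:
  fixes f :: "'a::real_inner \<Rightarrow> real"
  assumes "GDERIV f z :> g"
  shows "grad f z = g"
  unfolding grad_def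
proof (rule some_equality)
  fix g' assume "GDERIV f z :> g'"
  then have "(\<lambda>h. h \<bullet> g') = (\<lambda>h. h \<bullet> g)"
    using assms unfolding gderiv_def by (rule has_derivative_unique)
  then have "(g' - g) \<bullet> g' = (g' - g) \<bullet> g"
    by metis
  then have "(g' - g) \<bullet> (g' - g) = 0"
    by (simp add: inner_diff_right)
  then show "g' = g"
    by simp
qed fact

lemma
  assumes "linear f"
  shows convex_on_linear_plus_const: "convex_on UNIV (\<lambda>x. f x + c)"
    and concave_on_linear_plus_const: "concave_on UNIV (\<lambda>x. f x + c)"
proof -
  have affine: "f ((1 - t) *\<^sub>R x + t *\<^sub>R y) + c = (1 - t) * (f x + c) + t * (f y + c)" for t x y
    by (simp only: linear_add[OF assms] linear_scale[OF assms]) (simp add: algebra_simps)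
  show "convex_on UNIV (\<lambda>x. f x + c)"
    by (intro convex_onI) (simp_all only: affine order_refl convex_UNIV)
  show "concave_on UNIV (\<lambda>x. f x + c)"
    unfolding concave_on_def
  proof (intro convex_onI)
    fix t x y
    show "- (f ((1 - t) *\<^sub>R x + t *\<^sub>R y) + c) \<le> (1 - t) * - (f x + c) + t * - (f y + c)"
      unfolding affine by (simp add: algebra_simps)
  qed simp
qed

lemma inner_vec_mult_swap: "inner (s * u) v = inner u (s * (v :: real^'n))"
  by (simp add: inner_vec_def mult_ac)

lemma linear_vec_mult_left: "linear (\<lambda>v :: real^'n. s * v)"
  by (rule linearI) (simp_all add: vec_eq_iff algebra_simps)

lemma norm_vec_mult_le:
  fixes s v :: "real^'n"
  assumes "\<And>a. \<bar>s $ a\<bar> \<le> R"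
  shows "norm (s * v) \<le> R * norm v"
proof -
  have "0 \<le> R"
    using assms[of undefined] by linarith
  have "norm (s * v) = L2_set (\<lambda>a. \<bar>s $ a\<bar> * \<bar>v $ a\<bar>) UNIV"
    by (simp add: norm_vec_def abs_mult)
  also have "\<dots> \<le> L2_set (\<lambda>a. R * \<bar>v $ a\<bar>) UNIV"
    using assms by (intro L2_set_mono mult_right_mono) auto
  also have "\<dots> = R * norm v"
    using \<open>0 \<le> R\<close> by (simp add: norm_vec_def L2_set_right_distrib)
  finally show ?thesis .
qed

lemma vec_mult_in_span_powers:
  fixes s b :: "real^'n::finite"
  assumes "v \<in> span {s ^ l * b | l. P l}" and "\<And>l. P l \<Longrightarrow> Q (Suc l)"
  shows "s * v \<in> span {s ^ l * b | l. Q l}"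
proof -
  have "s * v \<in> (\<lambda>v. s * v) ` span {s ^ l * b | l. P l}"
    using assms(1) by blast
  also have "\<dots> = span ((\<lambda>v. s * v) ` {s ^ l * b | l. P l})"
    by (rule span_linear_image[OF linear_vec_mult_left, symmetric])
  also have "\<dots> \<subseteq> span {s ^ l * b | l. Q l}"
  proof (intro span_mono subsetI)
    fix v assume "v \<in> (\<lambda>v. s * v) ` {s ^ l * b | l. P l}"
    then obtain l where "P l" "v = s ^ Suc l * b"
      by (auto simp: mult.assoc)
    then show "v \<in> {s ^ l * b | l. Q l}"
      using assms(2) by blast
  qed
  finally show ?thesis .
qed

definition embed_vec :: "(nat \<Rightarrow> 'n) \<Rightarrow> nat \<Rightarrow> (nat \<Rightarrow> real) \<Rightarrow> real^'n::finite" where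
  "embed_vec h m f = (\<chi> a. if a \<in> h ` {..m} then f (inv_into {..m} h a) else 0)"

lemma embed_vec_cong:
  assumes "\<And>i. i \<le> m \<Longrightarrow> f i = g i"
  shows "embed_vec h m f = embed_vec h m g"
  using assms inv_into_into[of _ h "{..m}"] by (auto simp: embed_vec_def vec_eq_iff)

lemma embed_vec_mult: "embed_vec h m f * embed_vec h m g = embed_vec h m (\<lambda>i. f i * g i)"
  by (simp add: embed_vec_def vec_eq_iff)

lemma embed_vec_power_mult:
  "embed_vec h m f ^ l * embed_vec h m g = embed_vec h m (\<lambda>i. f i ^ l * g i)"
  by (induction l) (simp_all add: embed_vec_mult mult.assoc)

lemma inner_embed_vec:
  assumes "inj_on h {..m}"
  shows "inner (embed_vec h m f) (embed_vec h m g) = (\<Sum>i\<le>m. f i * g i)"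
proof -
  have "inner (embed_vec h m f) (embed_vec h m g)
      = (\<Sum>a\<in>h ` {..m}. embed_vec h m f $ a * embed_vec h m g $ a)"
    unfolding inner_vec_def inner_real_def
    by (rule sum.mono_neutral_right) (auto simp: embed_vec_def)
  also have "\<dots> = (\<Sum>i\<le>m. f i * g i)"
    using assms by (simp add: sum.reindex embed_vec_def)
  finally show ?thesis .
qed

lemma norm_embed_vec_sq:
  assumes "inj_on h {..m}"
  shows "(norm (embed_vec h m f))\<^sup>2 = (\<Sum>i\<le>m. (f i)\<^sup>2)"
  using inner_embed_vec[OF assms, of f f] by (simp add: dot_square_norm power2_eq_square)

lemma abs_embed_vec_le:
  assumes "\<And>i. i \<le> m \<Longrightarrow> \<bar>f i\<bar> \<le> R" "0 \<le> R"
  shows "\<bar>embed_vec h m f $ a\<bar> \<le> R"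
  using assms inv_into_into[of a h "{..m}"] by (auto simp: embed_vec_def)

text \<open>With the componentwise product on real^'n, s * x is diag(s) x.\<close>

definition bilinear_game :: "real^'n \<Rightarrow> real^'n \<Rightarrow> ('n::finite) pt \<Rightarrow> real" where
  "bilinear_game s b z = inner (s * fst z) (snd z) - inner b (snd z)"

lemma has_gderiv_bilinear_game:
  fixes s b :: "real^'n::finite"
  shows "GDERIV (bilinear_game s b) z :> (s * snd z, s * fst z - b)"
proof -
  have "bounded_linear (\<lambda>v :: real^'n. s * v)"
    using linear_vec_mult_left linear_conv_bounded_linear by blast
  then have mult_fst: "((\<lambda>z. s * fst z) has_derivative (\<lambda>h. s * fst h)) (at z)"
    by (rule bounded_linear.has_derivative[OF _ has_derivative_fst[OF has_derivative_ident]])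
  show ?thesis
    unfolding gderiv_def bilinear_game_def
    by (rule derivative_eq_intros mult_fst refl)+
      (simp add: fun_eq_iff inner_prod_def inner_diff_right inner_vec_mult_swap inner_commute;
       metis inner_commute inner_vec_mult_swap)
qed

lemma grad_bilinear_game: "grad (bilinear_game s b) z = (s * snd z, s * fst z - b)"
  by (rule grad_eqI[OF has_gderiv_bilinear_game])

lemma bilinear_game_differentiable: "bilinear_game s b differentiable (at z)"
  using has_gderiv_bilinear_game unfolding gderiv_def by (rule differentiableI)

lemma R_smooth_bilinear_game:
  fixes s b :: "real^'n::finite"
  assumes "\<And>a. \<bar>s $ a\<bar> \<le> R"
  shows "R_smooth R (bilinear_game s b)"
  unfolding R_smooth_def
proof (intro conjI allI bilinear_game_differentiable lipschitz_onI)
  show "0 \<le> R"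
    using assms[of undefined] by linarith
  fix z1 z2 :: "'n pt"
  have "saddle_op (bilinear_game s b) z1 - saddle_op (bilinear_game s b) z2
      = (s * (snd z1 - snd z2), - (s * (fst z1 - fst z2)))"
    unfolding saddle_op_def grad_bilinear_game by (simp add: right_diff_distrib)
  then have "(dist (saddle_op (bilinear_game s b) z1) (saddle_op (bilinear_game s b) z2))\<^sup>2
      = (norm (s * (snd z1 - snd z2)))\<^sup>2 + (norm (s * (fst z1 - fst z2)))\<^sup>2"
    unfolding dist_norm by (simp add: norm_prod_def)
  also have "\<dots> \<le> (R * norm (snd z1 - snd z2))\<^sup>2 + (R * norm (fst z1 - fst z2))\<^sup>2"
    using norm_vec_mult_le[OF assms] by (intro add_mono power_mono) auto
  also have "\<dots> = (R * dist z1 z2)\<^sup>2"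
    by (simp add: dist_norm norm_prod_def power_mult_distrib distrib_left add.commute)
  finally show "dist (saddle_op (bilinear_game s b) z1) (saddle_op (bilinear_game s b) z2) \<le> R * dist z1 z2"
    by (rule power2_le_imp_le) (use \<open>0 \<le> R\<close> in simp)
qed

lemma convex_concave_bilinear_game:
  fixes s b :: "real^'n::finite"
  shows "convex_concave (bilinear_game s b)"
  unfolding convex_concave_def
proof (intro conjI allI)
  fix x y :: "real^'n"
  have "(\<lambda>x. bilinear_game s b (x, y)) = (\<lambda>x. inner x (s * y) + - inner b y)"
    by (simp add: fun_eq_iff bilinear_game_def inner_vec_mult_swap)
  then show "convex_on UNIV (\<lambda>x. bilinear_game s b (x, y))"
    by (simp only:) (rule convex_on_linear_plus_const[OF bounded_linear.linear[OF bounded_linear_inner_left]])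
  have "(\<lambda>y. bilinear_game s b (x, y)) = (\<lambda>y. inner (s * x - b) y + 0)"
    by (simp add: fun_eq_iff bilinear_game_def inner_diff_left)
  then show "concave_on UNIV (\<lambda>y. bilinear_game s b (x, y))"
    by (simp only:) (rule concave_on_linear_plus_const[OF bounded_linear.linear[OF bounded_linear_inner_right]])
qed

lemma saddle_point_bilinear_game:
  assumes "s * xs = b"
  shows "saddle_point (bilinear_game s b) (xs, 0)"
  using assms by (simp add: saddle_point_def bilinear_game_def)

lemma alg_iter_bilinear_game_span:
  fixes A :: "'n::finite algorithm" and s b :: "real^'n"
  assumes "alg_sep A"
  shows "fst (alg_iter A (bilinear_game s b) 0 i) \<in> span {s ^ l * b | l. odd l \<and> l < i}
       \<and> snd (alg_iter A (bilinear_game s b) 0 i) \<in> span {s ^ l * b | l. even l \<and> l < i}"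
proof (induction i rule: less_induct)
  case (less i)
  let ?z = "alg_iter A (bilinear_game s b) 0"
  show ?case
  proof (cases "i = 0")
    case True
    then show ?thesis
      by (simp add: alg_iter_def span_zero)
  next
    case False
    have grad_fst: "fst (grad (bilinear_game s b) (?z l)) \<in> span {s ^ l * b | l. odd l \<and> l < i}"
      if "l < i" for l
      using less[OF that] that
      by (auto simp: grad_bilinear_game intro!: vec_mult_in_span_powers[where P = "\<lambda>l'. even l' \<and> l' < l"])
    have "b \<in> span {s ^ l * b | l. even l \<and> l < i}"
      using False by (intro span_base) (auto intro!: exI[of _ 0])
    then have grad_snd: "snd (grad (bilinear_game s b) (?z l)) \<in> span {s ^ l * b | l. even l \<and> l < i}"
      if "l < i" for l
      using less[OF that] that
      by (auto simp: grad_bilinear_game intro!: span_diff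
          vec_mult_in_span_powers[where P = "\<lambda>l'. odd l' \<and> l' < l"])
    have "fst (?z i) - fst (0 :: 'n pt) \<in> span {fst (grad (bilinear_game s b) (?z l)) | l. l < i}
        \<and> snd (?z i) - snd (0 :: 'n pt) \<in> span {snd (grad (bilinear_game s b) (?z l)) | l. l < i}"
      using assms \<open>i \<noteq> 0\<close> bilinear_game_differentiable unfolding alg_sep_def
      by (meson less_one not_less)
    moreover have "span {fst (grad (bilinear_game s b) (?z l)) | l. l < i}
        \<subseteq> span {s ^ l * b | l. odd l \<and> l < i}"
      using grad_fst by (intro span_minimal subspace_span) auto
    moreover have "span {snd (grad (bilinear_game s b) (?z l)) | l. l < i}
        \<subseteq> span {s ^ l * b | l. even l \<and> l < i}"
      using grad_snd by (intro span_minimal subspace_span) auto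
    ultimately show ?thesis
      by auto
  qed
qed

lemma grad_bilinear_game_lower_bound:
  fixes A :: "'n::finite algorithm" and s b w :: "real^'n"
  assumes "alg_sep A" and orth: "\<And>q. 0 < q \<Longrightarrow> 2 * q \<le> k \<Longrightarrow> inner w (s ^ (2 * q) * b) = 0"
  shows "(inner w b)\<^sup>2
    \<le> (norm w)\<^sup>2 * (norm (grad (bilinear_game s b) (alg_iter A (bilinear_game s b) 0 k)))\<^sup>2"
proof -
  define z where "z = alg_iter A (bilinear_game s b) 0 k"
  have "s * fst z \<in> span {s ^ l * b | l. even l \<and> 0 < l \<and> l \<le> k}"
    using alg_iter_bilinear_game_span[OF assms(1), of s b k] unfolding z_def
    by (intro vec_mult_in_span_powers[where P = "\<lambda>l. odd l \<and> l < k"]) auto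
  also have "\<dots> \<subseteq> {v. inner w v = 0}"
    using orth by (intro span_minimal subspace_hyperplane) (auto elim!: evenE)
  finally have "inner w (s * fst z - b) = - inner w b"
    by (simp add: inner_diff_right)
  then have "(inner w b)\<^sup>2 \<le> (norm w)\<^sup>2 * (norm (s * fst z - b))\<^sup>2"
    using Cauchy_Schwarz_ineq[of w "s * fst z - b"] by (simp add: power2_norm_eq_inner)
  also have "\<dots> \<le> (norm w)\<^sup>2 * (norm (grad (bilinear_game s b) z))\<^sup>2"
    by (intro mult_left_mono) (simp_all add: grad_bilinear_game norm_prod_def)
  finally show ?thesis
    unfolding z_def .
qed

lemma cheb_bilinear_instance:
  fixes h :: "nat \<Rightarrow> 'n::finite"
  assumes inj: "inj_on h {..m}" and "R > 0"
  obtains s xs b w :: "real^'n" where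
    "\<And>a. \<bar>s $ a\<bar> \<le> R" "s * xs = b"
    "(norm xs)\<^sup>2 = \<gamma>\<^sup>2 * (2 * real m + 1) / R\<^sup>2" "(norm w)\<^sup>2 = 2 * real m + 1"
    "inner w b = \<gamma>" "\<And>q. 0 < q \<Longrightarrow> q \<le> m \<Longrightarrow> inner w (s ^ (2 * q) * b) = 0"
proof -
  define s where "s = embed_vec h m (\<lambda>i. R * cheb_node m i)"
  define b where "b = embed_vec h m (\<lambda>i. \<gamma> * cheb_rhs m i)"
  define w where "w = embed_vec h m (cheb_test m)"
  define xs where "xs = embed_vec h m (\<lambda>i. \<gamma> * cheb_rhs m i / (R * cheb_node m i))"
  have moment: "inner w (s ^ (2 * q) * b) = (if q = 0 then \<gamma> else 0)" if "q \<le> m" for q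
  proof -
    have "inner w (s ^ (2 * q) * b) = (\<Sum>i\<le>m. \<gamma> * R ^ (2 * q) * (cheb_weight m i * cheb_node m i ^ (2 * q)))"
      unfolding w_def s_def b_def embed_vec_power_mult inner_embed_vec[OF inj]
      by (intro sum.cong refl)
        (simp add: power_mult_distrib cheb_test_mult_rhs[symmetric] mult_ac)
    then show ?thesis
      using cheb_weight_moment[OF that] by (simp flip: sum_distrib_left)
  qed
  show ?thesis
  proof (rule that[of s xs b w])
    show "\<bar>s $ a\<bar> \<le> R" for a
      unfolding s_def using \<open>R > 0\<close>
      by (intro abs_embed_vec_le) (auto simp: abs_mult abs_of_pos cheb_node_pos cheb_node_le_1)
    show "s * xs = b"
      unfolding s_def xs_def b_def embed_vec_mult using \<open>R > 0\<close> cheb_node_pos[THEN less_imp_neq]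
      by (intro embed_vec_cong) (simp add: field_simps)
    have "(norm xs)\<^sup>2 = \<gamma>\<^sup>2 / R\<^sup>2 * (\<Sum>i\<le>m. (cheb_rhs m i / cheb_node m i)\<^sup>2)"
      unfolding xs_def norm_embed_vec_sq[OF inj] sum_distrib_left
      by (intro sum.cong refl) (simp add: power_divide power_mult_distrib)
    moreover have "(\<Sum>i\<le>m. (cheb_rhs m i / cheb_node m i)\<^sup>2) = 2 * real m + 1"
      by (simp add: cheb_rhs_div_node_sq sum_abs_cheb_weight_div_node)
    ultimately show "(norm xs)\<^sup>2 = \<gamma>\<^sup>2 * (2 * real m + 1) / R\<^sup>2"
      by simp
    show "(norm w)\<^sup>2 = 2 * real m + 1"
      unfolding w_def norm_embed_vec_sq[OF inj]
      by (simp add: cheb_test_sq sum_abs_cheb_weight_div_node)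
    show "inner w b = \<gamma>"
      using moment[of 0] by (simp add: s_def)
    show "inner w (s ^ (2 * q) * b) = 0" if "0 < q" "q \<le> m" for q
      using moment[OF that(2)] that(1) by simp
  qed
qed

theorem corollary3:
  fixes R D :: real and k :: nat and A :: "'n::finite algorithm"
  assumes "R > 0" and "D > 0" and "CARD('n) \<ge> k + 2" and "alg_sep A"
  shows "\<forall>c < R^2 * D^2 / (2 * real (k div 2) + 1)^2.
           \<exists>L z0 zs. R_smooth R L \<and> convex_concave L \<and> saddle_point L zs \<and>
             norm (z0 - zs) \<le> D \<and> (norm (grad L (alg_iter A L z0 k)))^2 > c"
proof (intro allI impI)
  fix c assume c: "c < R^2 * D^2 / (2 * real (k div 2) + 1)^2"
  define m where "m = k div 2"
  define C where "C = 2 * real m + 1"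
  define \<gamma> where "\<gamma> = R * D / sqrt C"
  have "C > 0" and \<gamma>_sq: "\<gamma>\<^sup>2 = R\<^sup>2 * D\<^sup>2 / C"
    by (simp_all add: C_def \<gamma>_def power_divide power_mult_distrib)
  have "card {..m} \<le> CARD('n)"
    using assms(3) div_le_dividend[of k 2] by (simp add: m_def)
  then obtain h :: "nat \<Rightarrow> 'n" where "inj_on h {..m}"
    using card_le_inj[of "{..m}" "UNIV :: 'n set"] by auto
  then obtain s xs b w :: "real^'n" where s: "\<And>a. \<bar>s $ a\<bar> \<le> R" and xs: "s * xs = b"
    and norm_xs: "(norm xs)\<^sup>2 = \<gamma>\<^sup>2 * C / R\<^sup>2" and norm_w: "(norm w)\<^sup>2 = C"
    and wb: "inner w b = \<gamma>" and orth: "\<And>q. 0 < q \<Longrightarrow> q \<le> m \<Longrightarrow> inner w (s ^ (2 * q) * b) = 0"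
    unfolding C_def using \<open>R > 0\<close> by (rule cheb_bilinear_instance[where \<gamma> = \<gamma>]) blast
  have "norm (0 - (xs, 0 :: real^'n)) = D"
    using norm_xs \<open>C > 0\<close> \<open>R > 0\<close> \<open>D > 0\<close> by (simp add: norm_prod_def \<gamma>_sq)
  define g where "g = grad (bilinear_game s b) (alg_iter A (bilinear_game s b) 0 k)"
  have "\<gamma>\<^sup>2 \<le> C * (norm g)\<^sup>2"
    unfolding g_def wb[symmetric] norm_w[symmetric]
    by (rule grad_bilinear_game_lower_bound[OF assms(4)]) (simp add: orth m_def)
  then have "R\<^sup>2 * D\<^sup>2 / C \<le> C * (norm g)\<^sup>2"
    by (simp only: \<gamma>_sq)
  then have "R\<^sup>2 * D\<^sup>2 / C\<^sup>2 \<le> (norm g)\<^sup>2"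
    using \<open>C > 0\<close> by (simp add: field_simps power2_eq_square)
  then have "c < (norm g)\<^sup>2"
    using c unfolding C_def m_def by linarith
  then show "\<exists>L z0 zs. R_smooth R L \<and> convex_concave L \<and> saddle_point L zs \<and>
             norm (z0 - zs) \<le> D \<and> (norm (grad L (alg_iter A L z0 k)))^2 > c"
    using R_smooth_bilinear_game[OF s] convex_concave_bilinear_game saddle_point_bilinear_game[OF xs]
      \<open>norm (0 - (xs, 0)) = D\<close>
    unfolding g_def by (intro exI[of _ "bilinear_game s b"] exI[of _ 0] exI[of _ "(xs, 0)"]) auto
qed

end
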